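(* Let $u\neq0$, $v$ be parameters and let $\mathrm{e}(y\mathrm{T}_{u^{-1}}\mathbf{D}_{s,t},v)=\sum_{n\ge0}v^{\binom{n}{2}}\frac{y^n}{\{n\}_{s,t}!}(\mathrm{T}_{u^{-1}}\mathbf{D}_{s,t})^n$, acting on the variable $x$. Then (1) for every $\alpha$ (with the convention $\mathbf{D}_{s,t}x^{\beta}=\{\beta\}_{s,t}x^{\beta-1}$ for all exponents $\beta$), as formal series in $y$, $$\mathrm{e}(y\mathrm{T}_{u^{-1}}\mathbf{D}_{s,t},v)\,\big\{u^{\binom{\alpha}{2}}x^{\alpha}\big\}=(x\oplus_{u,v}y)_{s,t}^{(\alpha)};$$ (2) $\mathrm{e}(y\mathrm{T}_{u^{-1}}\mathbf{D}_{s,t},v)\exp_{s,t}(x,u)=\exp_{s,t}(x\oplus_{u,v}y)$, where $\exp_{s,t}(x,u)=\sum_{n\ge0}u^{\binom n2}\frac{x^n}{\{n\}_{s,t}!}$ and $\exp_{s,t}(x\oplus_{u,v}y)=\sum_{n\ge0}\frac{(x\oplus_{u,v}y)^{(n)}_{s,t}}{\{n\}_{s,t}!}$.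
   Context: Let $s,t$ be nonzero reals with $s^2+4t\neq0$, $\varphi=\frac{s+\sqrt{s^2+4t}}{2}$, $\varphi'=\frac{s-\sqrt{s^2+4t}}{2}$, and for a complex exponent $\beta$ (fixed branch of powers) $\{\beta\}_{s,t}=\frac{\varphi^\beta-\varphi'^\beta}{\varphi-\varphi'}$; $\{n\}_{s,t}!=\{1\}_{s,t}\cdots\{n\}_{s,t}$, $\{0\}_{s,t}!=1$; $\left\{{\alpha\atop k}\right\}_{s,t}=\frac{\{\alpha\}_{s,t}\{\alpha-1\}_{s,t}\cdots\{\alpha-k+1\}_{s,t}}{\{k\}_{s,t}!}$; $\binom{\beta}{2}=\beta(\beta-1)/2$. $\mathbf{D}_{s,t}$ is the $(s,t)$-derivative, $\mathbf{D}_{s,t}f(x)=\frac{f(\varphi x)-f(\varphi'x)}{(\varphi-\varphi')x}$, and $\mathrm{T}_af(x)=f(ax)$. The deformed binomial series is $(x\oplus_{u,v}y)_{s,t}^{(\alpha)}=\sum_{n\geq0}\left\{{\alpha\atop n}\right\}_{s,t}u^{\binom{\alpha-n}{2}}v^{\binom{n}{2}}x^{\alpha-n}y^n$. *)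

theory Defs
  imports "HOL-Analysis.Analysis"
begin

text \<open>Roots of z^2 - s z - t (possibly complex); complex powers use the principal branch (powr).\<close>
definition phi :: "real \<Rightarrow> real \<Rightarrow> complex" where
  "phi s t = (complex_of_real s + csqrt (complex_of_real (s^2 + 4*t))) / 2"

definition phi' :: "real \<Rightarrow> real \<Rightarrow> complex" where
  "phi' s t = (complex_of_real s - csqrt (complex_of_real (s^2 + 4*t))) / 2"

definition br :: "real \<Rightarrow> real \<Rightarrow> complex \<Rightarrow> complex" where
  "br s t \<beta> = (phi s t powr \<beta> - phi' s t powr \<beta>) / (phi s t - phi' s t)"

definition brfact :: "real \<Rightarrow> real \<Rightarrow> nat \<Rightarrow> complex" where
  "brfact s t n = (\<Prod>k\<in>{1..n}. br s t (of_nat k))"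

definition brbinom :: "real \<Rightarrow> real \<Rightarrow> complex \<Rightarrow> nat \<Rightarrow> complex" where
  "brbinom s t \<alpha> k = (\<Prod>i<k. br s t (\<alpha> - of_nat i)) / brfact s t k"

definition cbinom2 :: "complex \<Rightarrow> complex" where
  "cbinom2 \<beta> = \<beta> * (\<beta> - 1) / 2"

text \<open>Formal generalized power series in x: f represents the formal sum
  of f(beta) x^beta over all complex exponents beta.\<close>
type_synonym gseries = "complex \<Rightarrow> complex"

definition monom :: "complex \<Rightarrow> complex \<Rightarrow> gseries" where
  "monom c \<beta> = (\<lambda>\<gamma>. if \<gamma> = \<beta> then c else 0)"

text \<open>(s,t)-derivative with the convention D x^beta = {beta} x^(beta-1), extended linearly.\<close>
definition Dst :: "real \<Rightarrow> real \<Rightarrow> gseries \<Rightarrow> gseries" where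
  "Dst s t f = (\<lambda>\<gamma>. br s t (\<gamma> + 1) * f (\<gamma> + 1))"

text \<open>Dilation T_{u^{-1}}: x^beta |-> (x/u)^beta = u^(-beta) x^beta, extended linearly.\<close>
definition Tinv :: "complex \<Rightarrow> gseries \<Rightarrow> gseries" where
  "Tinv u f = (\<lambda>\<gamma>. u powr (- \<gamma>) * f \<gamma>)"

text \<open>e(y T_{u^{-1}} D_{s,t}, v) applied to f, as a formal series in y:
  coefficient of y^n.\<close>
definition eop :: "real \<Rightarrow> real \<Rightarrow> complex \<Rightarrow> complex \<Rightarrow> gseries \<Rightarrow> nat \<Rightarrow> gseries" where
  "eop s t u v f n = (\<lambda>\<gamma>. (v ^ (n choose 2) / brfact s t n) * ((Tinv u \<circ> Dst s t) ^^ n) f \<gamma>)"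

text \<open>Deformed binomial (x (+)_{u,v} y)^{(alpha)}_{s,t}: coefficient of y^n.\<close>
definition oplus :: "real \<Rightarrow> real \<Rightarrow> complex \<Rightarrow> complex \<Rightarrow> complex \<Rightarrow> nat \<Rightarrow> gseries" where
  "oplus s t u v \<alpha> n = monom (brbinom s t \<alpha> n * u powr cbinom2 (\<alpha> - of_nat n) * v ^ (n choose 2))
                               (\<alpha> - of_nat n)"

definition expst :: "real \<Rightarrow> real \<Rightarrow> complex \<Rightarrow> gseries" where
  "expst s t u = (\<lambda>\<gamma>. \<Sum>m. monom (u ^ (m choose 2) / brfact s t m) (of_nat m) \<gamma>)"

text \<open>exp_{s,t}(x (+)_{u,v} y) = sum_n (x (+)_{u,v} y)^{(n)} / {n}!: coefficient of y^k.\<close>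
definition expoplus :: "real \<Rightarrow> real \<Rightarrow> complex \<Rightarrow> complex \<Rightarrow> nat \<Rightarrow> gseries" where
  "expoplus s t u v k = (\<lambda>\<gamma>. \<Sum>n. oplus s t u v (of_nat n) k \<gamma> / brfact s t n)"

end

theory Submission
  imports Defs
begin

text \<open>The operator \<open>T\<^bsub>1/u\<^esub> D\<^sub>s\<^sub>t\<close> lowers every exponent by one and multiplies the
  coefficient of \<open>x\<^sup>\<beta>\<close> by \<open>u\<^bsup>1-\<beta>\<^esup> {\<beta>}\<close>. Hence its \<open>n\<close>-th power sends
  \<open>u\<^bsup>binom(\<alpha>,2)\<^esup> x\<^sup>\<alpha>\<close> to \<open>{\<alpha>}\<dots>{\<alpha>-n+1} x\<^bsup>\<alpha>-n\<^esup>\<close> times a power of \<open>u\<close> whose exponent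
  telescopes: \<open>binom(\<alpha>,2) - ((\<alpha>-1) + \<dots> + (\<alpha>-n)) = binom(\<alpha>-n,2)\<close>. The operator
  acts on each coefficient separately, so (2) follows by applying (1) to the individual terms
  \<open>u\<^bsup>binom(N,2)\<^esup> x\<^sup>N / {N}!\<close> of \<open>exp\<^sub>s\<^sub>t(x,u)\<close>. The identities are formal: they hold for
  arbitrary values of the brackets \<open>{\<beta>}\<close>.\<close>

lemma funpow_weighted_shift:
  fixes w f :: "'a::semiring_1 \<Rightarrow> 'b::comm_monoid_mult"
  shows "((\<lambda>f x. w x * f (x + 1)) ^^ n) f x = (\<Prod>i<n. w (x + of_nat i)) * f (x + of_nat n)"
proof (induction n arbitrary: x)
  case 0
  then show ?case by simp
next
  case (Suc n)
  have "((\<lambda>f x. w x * f (x + 1)) ^^ Suc n) f x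
      = w x * ((\<Prod>i<n. w (x + 1 + of_nat i)) * f (x + 1 + of_nat n))"
    by (simp add: Suc.IH)
  also have "\<dots> = (\<Prod>i<Suc n. w (x + of_nat i)) * f (x + of_nat (Suc n))"
    by (subst prod.lessThan_Suc_shift) (simp add: ac_simps)
  finally show ?case .
qed

lemma Tinv_comp_Dst:
  "Tinv u \<circ> Dst s t = (\<lambda>f \<gamma>. (u powr (- \<gamma>) * br s t (\<gamma> + 1)) * f (\<gamma> + 1))"
  by (simp add: Tinv_def Dst_def fun_eq_iff)

lemma eop_apply:
  "eop s t u v f n \<gamma> = v ^ (n choose 2) / brfact s t n
     * (\<Prod>i<n. u powr (- (\<gamma> + of_nat i)) * br s t (\<gamma> + of_nat i + 1)) * f (\<gamma> + of_nat n)"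
  by (simp add: eop_def Tinv_comp_Dst funpow_weighted_shift add.assoc)

lemma eop_cong_scaled:
  assumes "f (\<gamma> + of_nat n) = c * g (\<gamma> + of_nat n)"
  shows "eop s t u v f n \<gamma> = c * eop s t u v g n \<gamma>"
  using assms by (simp add: eop_apply ac_simps)

lemma cbinom2_diff_of_nat:
  "cbinom2 (\<alpha> - of_nat n) - cbinom2 \<alpha> = (\<Sum>i<n. of_nat i + 1 - \<alpha>)"
  by (induction n) (simp_all add: cbinom2_def field_simps)

lemma cbinom2_of_nat: "cbinom2 (of_nat N) = of_nat (N choose 2)"
proof (induction N)
  case 0
  then show ?case by (simp add: cbinom2_def)
next
  case (Suc N)
  have "Suc N choose 2 = (N choose 2) + N"
    by (simp add: numeral_2_eq_2)
  with Suc show ?case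
    by (simp add: cbinom2_def field_simps)
qed

lemma oplus_diagonal:
  "oplus s t u v \<alpha> n (\<alpha> - of_nat n)
     = brbinom s t \<alpha> n * u powr cbinom2 (\<alpha> - of_nat n) * v ^ (n choose 2)"
  by (simp add: oplus_def monom_def)

lemma oplus_off_diagonal:
  "\<gamma> \<noteq> \<alpha> - of_nat n \<Longrightarrow> oplus s t u v \<alpha> n \<gamma> = 0"
  by (simp add: oplus_def monom_def)

lemma eop_monom:
  assumes "u \<noteq> 0"
  shows "eop s t u v (monom (u powr cbinom2 \<alpha>) \<alpha>) n = oplus s t u v \<alpha> n"
proof
  fix \<gamma>
  show "eop s t u v (monom (u powr cbinom2 \<alpha>) \<alpha>) n \<gamma> = oplus s t u v \<alpha> n \<gamma>"
  proof (cases "\<gamma> = \<alpha> - of_nat n")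
    case True
    have "(\<Prod>i<n. u powr (- (\<gamma> + of_nat i)) * br s t (\<gamma> + of_nat i + 1))
        = (\<Prod>i<n. u powr (of_nat i + 1 - \<alpha>) * br s t (\<alpha> - of_nat i))"
      by (subst prod.nat_diff_reindex[symmetric])
         (auto simp: True of_nat_diff algebra_simps intro!: prod.cong)
    also have "\<dots> = u powr (cbinom2 (\<alpha> - of_nat n) - cbinom2 \<alpha>) * (\<Prod>i<n. br s t (\<alpha> - of_nat i))"
      by (simp add: prod.distrib powr_sum[OF assms] cbinom2_diff_of_nat)
    finally have "eop s t u v (monom (u powr cbinom2 \<alpha>) \<alpha>) n \<gamma>
        = v ^ (n choose 2) / brfact s t n * (\<Prod>i<n. br s t (\<alpha> - of_nat i))
          * (u powr (cbinom2 (\<alpha> - of_nat n) - cbinom2 \<alpha>) * u powr cbinom2 \<alpha>)"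
      by (simp add: eop_apply True monom_def ac_simps)
    also have "\<dots> = oplus s t u v \<alpha> n \<gamma>"
      by (simp add: True oplus_diagonal brbinom_def powr_add[symmetric])
    finally show ?thesis .
  next
    case False
    then show ?thesis
      by (auto simp: eop_apply monom_def oplus_off_diagonal)
  qed
qed

lemma expst_of_nat:
  assumes "u \<noteq> 0"
  shows "expst s t u (of_nat N) = u powr cbinom2 (of_nat N) / brfact s t N"
proof -
  have "expst s t u (of_nat N) = (\<Sum>m\<in>{N}. monom (u ^ (m choose 2) / brfact s t m) (of_nat m) (of_nat N))"
    unfolding expst_def by (rule suminf_finite) (auto simp: monom_def)
  then show ?thesis
    using assms by (simp add: monom_def cbinom2_of_nat powr_nat')
qed

lemma expst_not_Nats:
  assumes "\<beta> \<notin> \<nat>"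
  shows "expst s t u \<beta> = 0"
proof -
  have "monom c (of_nat m) \<beta> = 0" for c m
    using assms by (auto simp: monom_def)
  then show ?thesis
    by (simp add: expst_def)
qed

lemma expoplus_of_nat:
  assumes "\<gamma> + of_nat k = of_nat N"
  shows "expoplus s t u v k \<gamma> = oplus s t u v (of_nat N) k \<gamma> / brfact s t N"
proof -
  have "expoplus s t u v k \<gamma> = (\<Sum>n\<in>{N}. oplus s t u v (of_nat n) k \<gamma> / brfact s t n)"
    unfolding expoplus_def
    by (rule suminf_finite) (use assms in \<open>auto intro!: oplus_off_diagonal\<close>)
  then show ?thesis by simp
qed

lemma expoplus_not_Nats:
  assumes "\<gamma> + of_nat k \<notin> \<nat>"
  shows "expoplus s t u v k \<gamma> = 0"
proof -
  have "oplus s t u v (of_nat n) k \<gamma> = 0" for n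
    using assms by (intro oplus_off_diagonal) (auto simp: diff_eq_eq)
  then show ?thesis
    by (simp add: expoplus_def)
qed

theorem mainTheorem5:
  fixes s t :: real and u v :: complex
  assumes "s \<noteq> 0" and "t \<noteq> 0" and "s^2 + 4*t \<noteq> 0" and "u \<noteq> 0"
  shows "(\<forall>\<alpha>::complex. eop s t u v (monom (u powr cbinom2 \<alpha>) \<alpha>) = oplus s t u v \<alpha>)
         \<and> eop s t u v (expst s t u) = expoplus s t u v"
proof
  show "\<forall>\<alpha>. eop s t u v (monom (u powr cbinom2 \<alpha>) \<alpha>) = oplus s t u v \<alpha>"
    using eop_monom[OF \<open>u \<noteq> 0\<close>] by blast
  show "eop s t u v (expst s t u) = expoplus s t u v"
  proof (intro ext)
    fix k \<gamma>
    show "eop s t u v (expst s t u) k \<gamma> = expoplus s t u v k \<gamma>"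
    proof (cases "\<gamma> + of_nat k \<in> \<nat>")
      case True
      then obtain N where N: "\<gamma> + of_nat k = of_nat N"
        by (auto elim: Nats_cases)
      have "eop s t u v (expst s t u) k \<gamma>
          = 1 / brfact s t N * eop s t u v (monom (u powr cbinom2 (of_nat N)) (of_nat N)) k \<gamma>"
        by (rule eop_cong_scaled) (simp add: N expst_of_nat[OF \<open>u \<noteq> 0\<close>] monom_def)
      also have "\<dots> = expoplus s t u v k \<gamma>"
        by (simp add: eop_monom[OF \<open>u \<noteq> 0\<close>] expoplus_of_nat[OF N])
      finally show ?thesis .
    next
      case False
      then show ?thesis
        by (simp add: eop_apply expst_not_Nats expoplus_not_Nats)
    qed
  qed
qed

end
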